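(* Let $(\Sigma,\mathsf{ar})$ be an at most countable binding signature with associated functors $F,F_\alpha$ and maps $a^{(n)}:F^n1\to F_\alpha^n1$. Then for every $n$, $a^{(n)}$ is surjective, has orbit-finite fibres, and is a safe map.
   Context: Nominal sets over a countably infinite set $\mathcal V$ of names; $[\mathcal V]X$ the name-abstraction with classes $\langle x\rangle u$. Binding signature: symbols $\mathsf{op}\in\Sigma$ with arities finite lists $(n_1,\dots,n_k)$. $F_\alpha X=\mathcal V+\coprod_{\mathsf{op}}\prod_i[\mathcal V]^{n_i}X$, $FX=\mathcal V+\coprod_{\mathsf{op}}\prod_i(\mathcal V^{n_i}\times X)$, $q_X:FX\to F_\alpha X$ identity on $\mathcal V$ and $(x^1,\dots,x^n,u)\mapsto\langle x^1\rangle\cdots\langle x^n\rangle u$ on each factor. $1=\{*\}$; $a^{(0)}=\mathrm{id}_1$, $a^{(n+1)}=q_{F_\alpha^n1}\circ F(a^{(n)})$. An orbit is an equivalence class of $u\sim\pi\cdot u$; a map has orbit-finite fibres if each fibre lies in finitely many orbits. $u$ is $f$-safe if $|\mathsf{supp}(u)|=\max\{|\mathsf{supp}(v)|:v\in f^{-1}(f(u))\}$; $f$ is safe if every element of the codomain has an $f$-safe preimage. *)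

theory Defs
  imports "HOL-Library.Countable"
begin

text \<open>Names: the countably infinite set V is represented by nat.
  Finitely supported permutations of names.\<close>

definition fperm :: "(nat \<Rightarrow> nat) \<Rightarrow> bool" where
  "fperm p \<longleftrightarrow> bij p \<and> finite {a. p a \<noteq> a}"

definition nswap :: "nat \<Rightarrow> nat \<Rightarrow> nat \<Rightarrow> nat" where
  "nswap a b = (\<lambda>c. if c = a then b else if c = b then a else c)"

text \<open>A universe of values in which all the nominal sets F^n 1 and F_alpha^n 1 live.
  Star is the element of 1; Nm a a name; Inj op t the coproduct injection of summand op;
  Tup ts a finite product (tuple); Pr s t a binary pair; Abs g a name-abstraction class,
  i.e. a set of pairs (y,v) (an equivalence class), encoded as the graph of the
  partial function g (each y occurs in at most one pair of such a class).\<close>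

datatype 'op nv = Star | Nm nat | Inj 'op "'op nv" | Tup "'op nv list"
  | Pr "'op nv" "'op nv" | Abs "nat \<Rightarrow> 'op nv option"

text \<open>The permutation action (on Abs: the pointwise action on the set of pairs).\<close>
primrec perm :: "(nat \<Rightarrow> nat) \<Rightarrow> 'op nv \<Rightarrow> 'op nv" where
  "perm p Star = Star"
| "perm p (Nm a) = Nm (p a)"
| "perm p (Inj c t) = Inj c (perm p t)"
| "perm p (Tup ts) = Tup (map (perm p) ts)"
| "perm p (Pr s t) = Pr (perm p s) (perm p t)"
| "perm p (Abs g) = Abs (\<lambda>y. map_option (perm p) (g (inv p y)))"

definition supp :: "'op nv \<Rightarrow> nat set" where
  "supp u = {a. infinite {b. perm (nswap a b) u \<noteq> u}}"

definition orbit :: "'op nv \<Rightarrow> 'op nv set" where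
  "orbit u = {perm p u | p. fperm p}"

definition alpha_rel :: "nat \<times> 'op nv \<Rightarrow> nat \<times> 'op nv \<Rightarrow> bool" where
  "alpha_rel xu yv \<longleftrightarrow> (case xu of (x, u) \<Rightarrow> case yv of (y, v) \<Rightarrow>
     (\<exists>z. z \<noteq> x \<and> z \<noteq> y \<and> z \<notin> supp u \<and> z \<notin> supp v
          \<and> perm (nswap x z) u = perm (nswap y z) v))"

definition abs_class :: "nat \<Rightarrow> 'op nv \<Rightarrow> 'op nv" where
  "abs_class x u = Abs (\<lambda>y. if (\<exists>v. alpha_rel (y, v) (x, u))
       then Some (THE v. alpha_rel (y, v) (x, u)) else None)"

primrec absn :: "nat \<Rightarrow> 'op nv set \<Rightarrow> 'op nv set" where
  "absn 0 X = X"
| "absn (Suc k) X = {abs_class x w | x w. w \<in> absn k X}"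

text \<open>F X = V + coprod_op prod_i (V^{n_i} x X)\<close>
definition Fset :: "('op \<Rightarrow> nat list) \<Rightarrow> 'op nv set \<Rightarrow> 'op nv set" where
  "Fset ar X = range Nm \<union> {Inj c (Tup ts) | c ts. list_all2
      (\<lambda>k t. \<exists>xs w. length xs = k \<and> w \<in> X \<and> t = Pr (Tup (map Nm xs)) w) (ar c) ts}"

text \<open>F_alpha X = V + coprod_op prod_i [V]^{n_i} X\<close>
definition Faset :: "('op \<Rightarrow> nat list) \<Rightarrow> 'op nv set \<Rightarrow> 'op nv set" where
  "Faset ar X = range Nm \<union> {Inj c (Tup ts) | c ts. list_all2
      (\<lambda>k t. t \<in> absn k X) (ar c) ts}"

primrec Fiter :: "('op \<Rightarrow> nat list) \<Rightarrow> nat \<Rightarrow> 'op nv set" where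
  "Fiter ar 0 = {Star}"
| "Fiter ar (Suc n) = Fset ar (Fiter ar n)"

primrec Faiter :: "('op \<Rightarrow> nat list) \<Rightarrow> nat \<Rightarrow> 'op nv set" where
  "Faiter ar 0 = {Star}"
| "Faiter ar (Suc n) = Faset ar (Faiter ar n)"

fun fmap_fac :: "('op nv \<Rightarrow> 'op nv) \<Rightarrow> 'op nv \<Rightarrow> 'op nv" where
  "fmap_fac f (Pr p w) = Pr p (f w)"
| "fmap_fac f t = t"

fun Fmap :: "('op nv \<Rightarrow> 'op nv) \<Rightarrow> 'op nv \<Rightarrow> 'op nv" where
  "Fmap f (Inj c (Tup ts)) = Inj c (Tup (map (fmap_fac f) ts))"
| "Fmap f t = t"

fun name_of :: "'op nv \<Rightarrow> nat" where
  "name_of (Nm a) = a"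
| "name_of _ = 0"

text \<open>q_X: (x^1,...,x^n,u) |-> <x^1>...<x^n>u on each factor, identity on V.\<close>
fun qfac :: "'op nv \<Rightarrow> 'op nv" where
  "qfac (Pr (Tup ns) w) = foldr (\<lambda>m acc. abs_class (name_of m) acc) ns w"
| "qfac t = t"

fun qmap :: "'op nv \<Rightarrow> 'op nv" where
  "qmap (Inj c (Tup ts)) = Inj c (Tup (map qfac ts))"
| "qmap t = t"

primrec amap :: "nat \<Rightarrow> 'op nv \<Rightarrow> 'op nv" where
  "amap 0 = id"
| "amap (Suc n) = qmap \<circ> Fmap (amap n)"

definition f_safe :: "('op nv \<Rightarrow> 'op nv) \<Rightarrow> 'op nv set \<Rightarrow> 'op nv \<Rightarrow> bool" where
  "f_safe f A u \<longleftrightarrow> u \<in> A \<and> (\<forall>v\<in>A. f v = f u \<longrightarrow> card (supp v) \<le> card (supp u))"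

definition safe_map :: "('op nv \<Rightarrow> 'op nv) \<Rightarrow> 'op nv set \<Rightarrow> 'op nv set \<Rightarrow> bool" where
  "safe_map f A B \<longleftrightarrow> (\<forall>y\<in>B. \<exists>u. f_safe f A u \<and> f u = y)"

definition orbit_finite_fibres :: "('op nv \<Rightarrow> 'op nv) \<Rightarrow> 'op nv set \<Rightarrow> 'op nv set \<Rightarrow> bool" where
  "orbit_finite_fibres f A B \<longleftrightarrow> (\<forall>y\<in>B. finite (orbit ` {x \<in> A. f x = y}))"

end

theory Submission
  imports Defs
begin

text \<open>Elements of F^n 1 are abstraction-free terms, so their support is their set of names, and
  a^(n) is equivariant. Every name of a preimage v of y either stands in binding position or lies in
  supp y, and any two preimages of y have the same shape (they differ only by renaming binders level
  by level), hence the same number of binding positions. Thus |supp v| is at most that number plus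
  |supp y|, with equality for a preimage whose binders are distinct and fresh for y; alpha-renaming
  produces such a preimage of every y, which gives surjectivity and safety. The same bound lets a
  finite permutation move every element of a fibre onto a term of the common shape whose names lie
  in a fixed finite set, and there are only finitely many of those: the fibres are orbit-finite.\<close>

section \<open>Permutations and support\<close>

lemma bij_nswap [simp]: "bij (nswap a b)"
  by (rule bij_betw_byWitness[where f'="nswap a b"]) (auto simp: nswap_def)

lemma nswap_nswap [simp]: "nswap a b (nswap a b c) = c"
  by (auto simp: nswap_def)

lemma nswap_comp_nswap [simp]: "nswap a b \<circ> nswap a b = id"
  by (auto simp: fun_eq_iff)

lemma nswap_self [simp]: "nswap a a = id"
  by (auto simp: nswap_def fun_eq_iff)

lemma nswap_commute: "nswap a b = nswap b a"
  by (auto simp: nswap_def fun_eq_iff)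

lemma nswap_apply: "nswap a b a = b" "nswap a b b = a" "c \<noteq> a \<Longrightarrow> c \<noteq> b \<Longrightarrow> nswap a b c = c"
  by (auto simp: nswap_def)

lemma nswap_conj: "bij p \<Longrightarrow> nswap (p a) (p b) \<circ> p = p \<circ> nswap a b"
  by (auto simp: fun_eq_iff nswap_def bij_is_inj inj_eq)

lemma obtain_fresh_name:
  assumes "finite (S :: nat set)"
  obtains z where "z \<notin> S"
  using ex_new_if_finite[OF infinite_UNIV_nat assms] by blast

lemma perm_id [simp]: "perm id u = u"
proof (induction u)
  case (Tup ts)
  then show ?case by (simp add: map_idI)
next
  case (Abs g)
  have "map_option (perm (\<lambda>a. a)) (g y) = g y" for y
    by (rule option.map_ident_strong) (use Abs.IH[OF rangeI] in \<open>auto simp: id_def\<close>)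
  then show ?case by (simp add: fun_eq_iff id_def)
qed auto

lemma perm_comp: "bij p \<Longrightarrow> bij q \<Longrightarrow> perm p (perm q u) = perm (p \<circ> q) u"
proof (induction u)
  case (Abs g)
  have inv_comp: "inv (p \<circ> q) y = inv q (inv p y)" for y
    using Abs.prems by (simp add: o_inv_distrib)
  have "map_option (perm p) (map_option (perm q) (g (inv q (inv p y)))) =
        map_option (perm (p \<circ> q)) (g (inv (p \<circ> q) y))" for y
    unfolding inv_comp option.map_comp
    by (rule option.map_cong0) (use Abs.IH[OF rangeI] Abs.prems in \<open>auto simp: comp_def\<close>)
  then show ?case by (simp only: perm.simps)
qed auto

lemma perm_inv_perm [simp]: "bij p \<Longrightarrow> perm (inv p) (perm p u) = u"
  by (simp add: perm_comp bij_imp_bij_inv bij_is_inj)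

lemma perm_perm_inv [simp]: "bij p \<Longrightarrow> perm p (perm (inv p) u) = u"
  by (simp add: perm_comp bij_imp_bij_inv surj_iff[THEN iffD1, OF bij_is_surj])

lemma perm_nswap_nswap [simp]: "perm (nswap a b) (perm (nswap a b) u) = u"
  by (simp add: perm_comp)

lemma perm_nswap_conj: "bij p \<Longrightarrow> perm (nswap (p a) (p b)) (perm p u) = perm p (perm (nswap a b) u)"
  by (simp add: perm_comp nswap_conj)

lemma supp_perm_subset: assumes p: "bij p" shows "supp (perm p u) \<subseteq> p ` supp u"
proof
  fix a assume "a \<in> supp (perm p u)"
  then have moved: "infinite {b. perm (nswap a b) (perm p u) \<noteq> perm p u}"
    by (simp add: supp_def)
  have p_inv: "p (inv p c) = c" for c
    using p by (simp add: bij_is_surj surj_f_inv_f)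
  have "perm (nswap a b) (perm p u) = perm p (perm (nswap (inv p a) (inv p b)) u)" for b
    using perm_nswap_conj[OF p, of "inv p a" "inv p b" u] by (simp add: p_inv)
  then have "{b. perm (nswap a b) (perm p u) \<noteq> perm p u}
      \<subseteq> p ` {b. perm (nswap (inv p a) b) u \<noteq> u}"
    using p_inv by (auto intro!: image_eqI[where x="inv p _"])
  with moved have "infinite {b. perm (nswap (inv p a) b) u \<noteq> u}"
    using finite_subset by blast
  then show "a \<in> p ` supp u"
    by (metis p_inv image_eqI mem_Collect_eq supp_def)
qed

lemma supp_perm: assumes p: "bij p" shows "supp (perm p u) = p ` supp u"
proof
  show "p ` supp u \<subseteq> supp (perm p u)"
    using supp_perm_subset[OF bij_imp_bij_inv[OF p], of "perm p u"] p
    by (auto simp: bij_is_inj bij_is_surj surj_f_inv_f intro: image_eqI[where x="inv p _"])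
qed (rule supp_perm_subset[OF p])

lemma finite_supp_perm_iff [simp]: "bij p \<Longrightarrow> finite (supp (perm p u)) \<longleftrightarrow> finite (supp u)"
  by (simp add: supp_perm finite_image_iff inj_on_subset[OF bij_is_inj])

lemma supp_subset_if_nswap_fixed:
  assumes "finite A" and "\<And>a b. a \<notin> A \<Longrightarrow> b \<notin> A \<Longrightarrow> perm (nswap a b) u = u"
  shows "supp u \<subseteq> A"
proof
  fix a assume "a \<in> supp u"
  show "a \<in> A"
  proof (rule ccontr)
    assume "a \<notin> A"
    then have "{b. perm (nswap a b) u \<noteq> u} \<subseteq> A"
      using assms(2) by blast
    with \<open>a \<in> supp u\<close> \<open>finite A\<close> show False
      by (auto simp: supp_def dest: finite_subset)
  qed
qed

lemma perm_fresh_nswap: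
  assumes a: "a \<notin> supp u" and b: "b \<notin> supp u"
  shows "perm (nswap a b) u = u"
proof (cases "a = b")
  case False
  have "finite ({c. perm (nswap a c) u \<noteq> u} \<union> {c. perm (nswap b c) u \<noteq> u} \<union> {a, b})"
    using a b by (simp add: supp_def)
  then obtain c where c: "c \<notin> {c. perm (nswap a c) u \<noteq> u} \<union> {c. perm (nswap b c) u \<noteq> u} \<union> {a, b}"
    by (rule obtain_fresh_name)
  have "nswap a b = nswap a c \<circ> (nswap b c \<circ> nswap a c)"
    using c False by (auto simp: fun_eq_iff nswap_def)
  then have "perm (nswap a b) u = perm (nswap a c) (perm (nswap b c) (perm (nswap a c) u))"
    by (simp add: perm_comp bij_comp)
  then show ?thesis using c by simp
qed simp

lemma supp_eqvt_subset:
  assumes "\<And>a b. f (perm (nswap a b) u) = perm (nswap a b) (f u)"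
  shows "supp (f u) \<subseteq> supp u"
proof -
  have "{b. perm (nswap a b) (f u) \<noteq> f u} \<subseteq> {b. perm (nswap a b) u \<noteq> u}" for a
    using assms by (metis (mono_tags, lifting) Collect_mono)
  then show ?thesis
    by (auto simp: supp_def dest: finite_subset)
qed

section \<open>Alpha-equivalence and abstraction classes\<close>

lemma alpha_relI:
  "z \<noteq> x \<Longrightarrow> z \<noteq> y \<Longrightarrow> z \<notin> supp u \<Longrightarrow> z \<notin> supp v
   \<Longrightarrow> perm (nswap x z) u = perm (nswap y z) v \<Longrightarrow> alpha_rel (x, u) (y, v)"
  unfolding alpha_rel_def by auto

lemma alpha_relE:
  assumes "alpha_rel (x, u) (y, v)"
  obtains z where "z \<noteq> x" "z \<noteq> y" "z \<notin> supp u" "z \<notin> supp v"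
    "perm (nswap x z) u = perm (nswap y z) v"
  using assms unfolding alpha_rel_def by auto

lemma alpha_rel_perm:
  assumes p: "bij p" and "alpha_rel (y, v) (x, w)"
  shows "alpha_rel (p y, perm p v) (p x, perm p w)"
proof -
  obtain z where z: "z \<noteq> y" "z \<noteq> x" "z \<notin> supp v" "z \<notin> supp w"
    "perm (nswap y z) v = perm (nswap x z) w"
    using assms(2) by (rule alpha_relE)
  show ?thesis
  proof (rule alpha_relI[where z="p z"])
    show "p z \<noteq> p y" "p z \<noteq> p x"
      using z p by (simp_all add: bij_is_inj inj_eq)
    show "p z \<notin> supp (perm p v)" "p z \<notin> supp (perm p w)"
      using z p by (simp_all add: supp_perm bij_is_inj inj_image_mem_iff)
    show "perm (nswap (p y) (p z)) (perm p v) = perm (nswap (p x) (p z)) (perm p w)"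
      using z(5) p by (simp add: perm_nswap_conj)
  qed
qed

lemma alpha_rel_eqvt:
  "bij p \<Longrightarrow> alpha_rel (p y, perm p v) (p x, perm p w) \<longleftrightarrow> alpha_rel (y, v) (x, w)"
  using alpha_rel_perm[of "inv p" "p y" "perm p v" "p x" "perm p w"] alpha_rel_perm[of p]
  by (auto simp: bij_imp_bij_inv bij_is_inj)

lemma alpha_rel_finite_supp:
  assumes "alpha_rel (y, v) (x, w)" and "finite (supp w)"
  shows "finite (supp v)"
proof -
  obtain z where "perm (nswap y z) v = perm (nswap x z) w"
    using assms(1) by (rule alpha_relE)
  then have "v = perm (nswap y z) (perm (nswap x z) w)"
    by (metis perm_nswap_nswap)
  then show ?thesis
    using assms(2) by simp
qed

lemma alpha_rel_fresh_witness:
  assumes "alpha_rel (y, v) (x, w)"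
    and z: "z \<noteq> x" "z \<noteq> y" "z \<notin> supp v" "z \<notin> supp w"
  shows "perm (nswap y z) v = perm (nswap x z) w"
proof -
  obtain z' where z': "z' \<noteq> y" "z' \<noteq> x" "z' \<notin> supp v" "z' \<notin> supp w"
    and eq: "perm (nswap y z') v = perm (nswap x z') w"
    using assms(1) by (rule alpha_relE)
  show ?thesis
  proof (cases "z = z'")
    case False
    have y: "nswap y z \<circ> nswap z' z = nswap z' z \<circ> nswap y z'"
      and x: "nswap x z \<circ> nswap z' z = nswap z' z \<circ> nswap x z'"
      using False z z' by (auto simp: fun_eq_iff nswap_def)
    have "perm (nswap y z) v = perm (nswap y z) (perm (nswap z' z) v)"
      using perm_fresh_nswap[OF z'(3) z(3)] by simp
    also have "\<dots> = perm (nswap z' z) (perm (nswap y z') v)"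
      by (simp add: perm_comp y)
    also have "\<dots> = perm (nswap x z) (perm (nswap z' z) w)"
      by (simp add: eq perm_comp x)
    also have "\<dots> = perm (nswap x z) w"
      using perm_fresh_nswap[OF z'(4) z(4)] by simp
    finally show ?thesis .
  qed (use eq in simp)
qed

text \<open>Two witnesses z1, z2 relate both candidates to w, and v2 is the swap of v1 by (z1 z2),
  which are both fresh for v1.\<close>
lemma alpha_rel_unique:
  assumes "alpha_rel (y, v1) (x, w)" and "alpha_rel (y, v2) (x, w)"
  shows "v1 = v2"
proof -
  obtain z1 where z1: "z1 \<noteq> y" "z1 \<noteq> x" "z1 \<notin> supp v1" "z1 \<notin> supp w"
    and "perm (nswap y z1) v1 = perm (nswap x z1) w"
    using assms(1) by (rule alpha_relE)
  then have v1: "v1 = perm (nswap y z1) (perm (nswap x z1) w)"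
    by (metis perm_nswap_nswap)
  obtain z2 where z2: "z2 \<noteq> y" "z2 \<noteq> x" "z2 \<notin> supp w"
    and "perm (nswap y z2) v2 = perm (nswap x z2) w"
    using assms(2) by (rule alpha_relE)
  then have v2: "v2 = perm (nswap y z2) (perm (nswap x z2) w)"
    by (metis perm_nswap_nswap)
  show ?thesis
  proof (cases "z1 = z2")
    case False
    have "nswap c z2 = nswap z1 z2 \<circ> nswap c z1 \<circ> nswap z1 z2" if "c \<noteq> z1" "c \<noteq> z2" for c
      using that False by (auto simp: fun_eq_iff nswap_def)
    then have conj: "perm (nswap c z2) u = perm (nswap z1 z2) (perm (nswap c z1) (perm (nswap z1 z2) u))"
      if "c \<noteq> z1" "c \<noteq> z2" for c u
      using that by (simp add: perm_comp bij_comp o_assoc)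
    have "v2 = perm (nswap z1 z2) (perm (nswap y z1) (perm (nswap x z1) (perm (nswap z1 z2) w)))"
      using z1 z2 by (simp add: v2 conj)
    also have "\<dots> = perm (nswap z1 z2) v1"
      by (simp add: perm_fresh_nswap[OF z1(4) z2(3)] v1)
    finally have v2_swap: "v2 = perm (nswap z1 z2) v1" .
    have "z2 \<notin> nswap y z1 ` nswap x z1 ` supp w"
      using z1 z2 False by (auto simp: nswap_def)
    then have "z2 \<notin> supp v1"
      by (simp add: v1 supp_perm)
    then show ?thesis
      by (simp add: v2_swap perm_fresh_nswap[OF z1(3)])
  qed (simp add: v1 v2)
qed

lemma the_alpha_rel: "alpha_rel (y, v) (x, w) \<Longrightarrow> (THE v. alpha_rel (y, v) (x, w)) = v"
  by (rule the_equality) (auto intro: alpha_rel_unique)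

lemma abs_class_eqvt:
  assumes p: "bij p"
  shows "perm p (abs_class x w) = abs_class (p x) (perm p w)"
proof -
  have p_inv: "p (inv p y) = y" for y
    using p by (simp add: bij_is_surj surj_f_inv_f)
  have rel: "alpha_rel (y, v) (p x, perm p w) \<longleftrightarrow> alpha_rel (inv p y, perm (inv p) v) (x, w)" for y v
    using alpha_rel_eqvt[OF p, of "inv p y" "perm (inv p) v" x w] p by (simp add: p_inv)
  have ex: "(\<exists>v. alpha_rel (y, v) (p x, perm p w)) \<longleftrightarrow> (\<exists>v. alpha_rel (inv p y, v) (x, w))" for y
  proof
    assume "\<exists>v. alpha_rel (y, v) (p x, perm p w)"
    then show "\<exists>v. alpha_rel (inv p y, v) (x, w)"
      using rel by blast
  next
    assume "\<exists>v. alpha_rel (inv p y, v) (x, w)"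
    then obtain v where "alpha_rel (inv p y, perm (inv p) (perm p v)) (x, w)"
      using p by auto
    then show "\<exists>v. alpha_rel (y, v) (p x, perm p w)"
      using rel by blast
  qed
  have "map_option (perm p) (if \<exists>v. alpha_rel (inv p y, v) (x, w)
          then Some (THE v. alpha_rel (inv p y, v) (x, w)) else None)
      = (if \<exists>v. alpha_rel (y, v) (p x, perm p w)
          then Some (THE v. alpha_rel (y, v) (p x, perm p w)) else None)" for y
  proof (cases "\<exists>v. alpha_rel (inv p y, v) (x, w)")
    case True
    then obtain v where v: "alpha_rel (inv p y, v) (x, w)" ..
    then have v': "alpha_rel (y, perm p v) (p x, perm p w)"
      using rel p by simp
    show ?thesis
      using True ex[of y] the_alpha_rel[OF v] the_alpha_rel[OF v'] by simp
  next
    case False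
    then show ?thesis
      using ex[of y] by simp
  qed
  then show ?thesis
    unfolding abs_class_def perm.simps by (intro arg_cong[where f=Abs] ext)
qed

lemma abs_class_nswap_eqvt:
  "x \<noteq> a \<Longrightarrow> x \<noteq> b \<Longrightarrow> perm (nswap a b) (abs_class x w) = abs_class x (perm (nswap a b) w)"
  by (simp add: abs_class_eqvt nswap_apply)

lemma alpha_rel_rename:
  assumes fw: "finite (supp w)" and b: "b \<notin> supp w" and "alpha_rel (y, v) (x, w)"
  shows "alpha_rel (y, v) (b, perm (nswap x b) w)"
proof (cases "b = x")
  case False
  let ?w' = "perm (nswap x b) w"
  have "finite ({x, y, b} \<union> supp v \<union> supp w \<union> supp ?w')"
    using fw alpha_rel_finite_supp[OF assms(3) fw] by simp
  then obtain z where z: "z \<notin> {x, y, b} \<union> supp v \<union> supp w \<union> supp ?w'"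
    by (rule obtain_fresh_name)
  have "nswap b z \<circ> nswap x b = nswap x z \<circ> nswap b z"
    using z False by (auto simp: fun_eq_iff nswap_def)
  then have "perm (nswap b z) ?w' = perm (nswap x z) (perm (nswap b z) w)"
    by (simp add: perm_comp)
  also have "\<dots> = perm (nswap y z) v"
    using perm_fresh_nswap[OF b, of z] alpha_rel_fresh_witness[OF assms(3), of z] z by simp
  finally show ?thesis
    using z by (intro alpha_relI[where z=z]) auto
qed (use assms in simp)

lemma abs_class_rename:
  assumes fw: "finite (supp w)" and b: "b \<notin> supp w"
  shows "abs_class x w = abs_class b (perm (nswap x b) w)"
proof -
  let ?w' = "perm (nswap x b) w"
  have "x \<notin> nswap x b ` supp w"
    using b by (metis image_iff nswap_apply(1) nswap_nswap)
  then have "x \<notin> supp ?w'"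
    by (simp add: supp_perm)
  \<comment> \<open>so renaming x back is again an instance of alpha_rel_rename\<close>
  then have "alpha_rel (y, v) (b, ?w') \<Longrightarrow> alpha_rel (y, v) (x, w)" for y v
    using alpha_rel_rename[of ?w' x y v b] fw by (simp add: nswap_commute)
  then have same: "alpha_rel (y, v) (x, w) \<longleftrightarrow> alpha_rel (y, v) (b, ?w')" for y v
    using alpha_rel_rename[OF fw b] by blast
  show ?thesis
    unfolding abs_class_def by (simp only: same)
qed

lemma abs_class_apply_binder:
  assumes "finite (supp w)" and "abs_class x w = Abs g"
  shows "g x = Some w"
proof -
  have "finite (insert x (supp w))"
    using assms(1) by simp
  then obtain z where "z \<notin> insert x (supp w)"
    by (rule obtain_fresh_name)
  then have refl: "alpha_rel (x, w) (x, w)"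
    by (intro alpha_relI[where z=z]) auto
  have "g = (\<lambda>y. if \<exists>v. alpha_rel (y, v) (x, w) then Some (THE v. alpha_rel (y, v) (x, w)) else None)"
    using assms(2) unfolding abs_class_def by simp
  then show ?thesis
    using refl the_alpha_rel[OF refl] by auto
qed

lemma abs_class_eq_iff:
  assumes "finite (supp w1)" and "finite (supp w2)"
  shows "abs_class x w1 = abs_class x w2 \<longleftrightarrow> w1 = w2"
proof
  assume "abs_class x w1 = abs_class x w2"
  obtain g where g: "abs_class x w1 = Abs g"
    by (simp add: abs_class_def)
  have "g x = Some w1" and "g x = Some w2"
    using abs_class_apply_binder[OF assms(1) g] abs_class_apply_binder[OF assms(2)] g \<open>abs_class x w1 = abs_class x w2\<close>
    by simp_all
  then show "w1 = w2" by simp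
qed simp

lemma supp_abs_class_subset:
  assumes fw: "finite (supp w)"
  shows "supp (abs_class x w) \<subseteq> supp w - {x}"
proof (rule supp_subset_if_nswap_fixed)
  have fixed: "perm (nswap a b) (abs_class x w) = abs_class x w"
    if "a \<notin> supp w - {x}" "b \<notin> supp w - {x}" "b \<noteq> x" for a b
  proof (cases "a = x")
    case True
    then show ?thesis
      using abs_class_rename[OF fw, of b x] that by (simp add: abs_class_eqvt nswap_apply)
  next
    case False
    then show ?thesis
      using that by (simp add: abs_class_nswap_eqvt perm_fresh_nswap)
  qed
  show "perm (nswap a b) (abs_class x w) = abs_class x w"
    if "a \<notin> supp w - {x}" "b \<notin> supp w - {x}" for a b
  proof (cases "b = x")
    case True
    then show ?thesis
      using that fixed[of b a] by (cases "a = x") (simp_all add: nswap_commute)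
  qed (use that fixed in blast)
qed (use fw in simp)

lemma supp_abs_class:
  assumes fw: "finite (supp w)"
  shows "supp (abs_class x w) = supp w - {x}"
proof
  show "supp w - {x} \<subseteq> supp (abs_class x w)"
  proof
    fix a assume a: "a \<in> supp w - {x}"
    have "perm (nswap a b) (abs_class x w) \<noteq> abs_class x w"
      if "perm (nswap a b) w \<noteq> w" "b \<noteq> x" for b
    proof
      assume "perm (nswap a b) (abs_class x w) = abs_class x w"
      then have "abs_class x (perm (nswap a b) w) = abs_class x w"
        using a that(2) by (simp add: abs_class_nswap_eqvt)
      then have "perm (nswap a b) w = w"
        using fw by (simp add: abs_class_eq_iff)
      with that(1) show False ..
    qed
    then have "{b. perm (nswap a b) w \<noteq> w} - {x} \<subseteq> {b. perm (nswap a b) (abs_class x w) \<noteq> abs_class x w}"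
      by blast
    moreover have "infinite ({b. perm (nswap a b) w \<noteq> w} - {x})"
      using a by (simp add: supp_def)
    ultimately show "a \<in> supp (abs_class x w)"
      by (auto simp: supp_def dest: finite_subset)
  qed
qed (rule supp_abs_class_subset[OF fw])

lemma foldr_abs_class_eqvt:
  "bij p \<Longrightarrow> perm p (foldr abs_class xs b) = foldr abs_class (map p xs) (perm p b)"
  by (induction xs) (simp_all add: abs_class_eqvt)

lemma supp_foldr_abs_class:
  "finite (supp b) \<Longrightarrow> supp (foldr abs_class xs b) = supp b - set xs"
  by (induction xs) (auto simp: supp_abs_class)

lemma finite_supp_foldr_abs_class:
  "finite (supp b) \<Longrightarrow> finite (supp (foldr abs_class xs b))"
  by (simp add: supp_foldr_abs_class)

text \<open>Rename the outermost binders of both sides to a common fresh name and peel it off.\<close>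
lemma foldr_abs_class_eq_imp_perm:
  "finite (supp b) \<Longrightarrow> finite (supp b') \<Longrightarrow> length xs = length xs'
   \<Longrightarrow> foldr abs_class xs b = foldr abs_class xs' b' \<Longrightarrow> \<exists>p. bij p \<and> b' = perm p b"
proof (induction xs arbitrary: xs' b b')
  case Nil
  then have "b' = perm id b" by simp
  then show ?case using bij_id by blast
next
  case (Cons x xs)
  from Cons.prems obtain x' xs'' where xs': "xs' = x' # xs''"
    by (cases xs') auto
  let ?T = "foldr abs_class xs b" and ?T' = "foldr abs_class xs'' b'"
  have fin: "finite (supp ?T)" "finite (supp ?T')"
    using Cons.prems finite_supp_foldr_abs_class by auto
  obtain z where z: "z \<notin> supp ?T" "z \<notin> supp ?T'"
    using fin by (metis UnI1 UnI2 finite_UnI obtain_fresh_name)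
  define \<tau> where "\<tau> = nswap x z \<circ> nswap x' z"
  have bij_\<tau>: "bij \<tau>"
    by (simp add: \<tau>_def bij_comp)
  have "abs_class z (perm (nswap x z) ?T) = abs_class x ?T"
    by (rule abs_class_rename[OF fin(1) z(1), symmetric])
  also have "\<dots> = abs_class x' ?T'"
    using Cons.prems(4) xs' by simp
  also have "\<dots> = abs_class z (perm (nswap x' z) ?T')"
    by (rule abs_class_rename[OF fin(2) z(2)])
  finally have "perm (nswap x z) ?T = perm (nswap x' z) ?T'"
    using fin by (simp add: abs_class_eq_iff)
  then have "?T = perm (nswap x z) (perm (nswap x' z) ?T')"
    by (metis perm_nswap_nswap)
  also have "\<dots> = perm \<tau> ?T'"
    by (simp add: \<tau>_def perm_comp)
  also have "\<dots> = foldr abs_class (map \<tau> xs'') (perm \<tau> b')"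
    by (rule foldr_abs_class_eqvt[OF bij_\<tau>])
  finally have "foldr abs_class xs b = foldr abs_class (map \<tau> xs'') (perm \<tau> b')" .
  moreover have "finite (supp (perm \<tau> b'))" and "length xs = length (map \<tau> xs'')"
    using Cons.prems xs' bij_\<tau> by simp_all
  ultimately obtain q where q: "bij q" "perm \<tau> b' = perm q b"
    using Cons.IH Cons.prems(1) by blast
  then have "b' = perm (inv \<tau>) (perm q b)"
    using bij_\<tau> by (metis perm_inv_perm)
  also have "\<dots> = perm (inv \<tau> \<circ> q) b"
    using bij_\<tau> q(1) by (simp add: perm_comp bij_imp_bij_inv)
  finally have "b' = perm (inv \<tau> \<circ> q) b" .
  with bij_comp[OF q(1) bij_imp_bij_inv[OF bij_\<tau>]] show ?case
    by blast
qed

section \<open>Abstraction-free terms\<close>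

primrec abs_free :: "'op nv \<Rightarrow> bool" where
  "abs_free Star = True"
| "abs_free (Nm a) = True"
| "abs_free (Inj c t) = abs_free t"
| "abs_free (Tup ts) = list_all abs_free ts"
| "abs_free (Pr s t) = (abs_free s \<and> abs_free t)"
| "abs_free (Abs g) = False"

primrec name_list :: "'op nv \<Rightarrow> nat list" where
  "name_list Star = []"
| "name_list (Nm a) = [a]"
| "name_list (Inj c t) = name_list t"
| "name_list (Tup ts) = concat (map name_list ts)"
| "name_list (Pr s t) = name_list s @ name_list t"
| "name_list (Abs g) = []"

text \<open>The names standing in binding position, i.e.\ those that q turns into abstractions.\<close>
primrec binders :: "'op nv \<Rightarrow> nat list" where
  "binders Star = []"
| "binders (Nm a) = []"
| "binders (Inj c t) = binders t"
| "binders (Tup ts) = concat (map binders ts)"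
| "binders (Pr s t) = name_list s @ binders t"
| "binders (Abs g) = []"

text \<open>Here perm is applied to a non-bijection; on abstraction-free terms it is plain renaming.\<close>
definition shape :: "'op nv \<Rightarrow> 'op nv" where
  "shape = perm (\<lambda>_. 0)"

lemma name_list_perm: "name_list (perm p u) = map p (name_list u)"
  by (induction u) (auto simp: map_concat cong: map_cong)

lemma binders_perm: "binders (perm p u) = map p (binders u)"
  by (induction u) (auto simp: map_concat name_list_perm cong: map_cong)

lemma set_binders_subset: "set (binders u) \<subseteq> set (name_list u)"
  by (induction u) auto

lemma name_list_Tup_Nm [simp]: "name_list (Tup (map Nm xs)) = xs"
  by (induction xs) auto

lemma perm_abs_free_cong:
  "abs_free u \<Longrightarrow> (\<And>a. a \<in> set (name_list u) \<Longrightarrow> p a = q a) \<Longrightarrow> perm p u = perm q u"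
  by (induction u) (auto simp: list_all_iff cong: map_cong)

lemma perm_perm_abs_free: "abs_free u \<Longrightarrow> perm p (perm q u) = perm (p \<circ> q) u"
  by (induction u) (auto simp: list_all_iff cong: map_cong)

lemma supp_abs_free:
  assumes "abs_free u"
  shows "supp u = set (name_list u)"
proof
  show "supp u \<subseteq> set (name_list u)"
    using assms by (intro supp_subset_if_nswap_fixed) (auto intro!: perm_abs_free_cong[of u _ id, simplified] simp: nswap_def)
  show "set (name_list u) \<subseteq> supp u"
  proof
    fix a assume a: "a \<in> set (name_list u)"
    have "perm (nswap a b) u \<noteq> u" if "b \<notin> set (name_list u)" for b
      using that a by (metis image_eqI list.set_map name_list_perm nswap_apply(1))
    then have "- set (name_list u) \<subseteq> {b. perm (nswap a b) u \<noteq> u}"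
      by blast
    moreover have "infinite (- set (name_list u))"
      by (simp add: Compl_eq_Diff_UNIV Diff_infinite_finite)
    ultimately show "a \<in> supp u"
      by (auto simp: supp_def dest: finite_subset)
  qed
qed

lemma shape_perm: "abs_free u \<Longrightarrow> shape (perm p u) = shape u"
  by (simp add: shape_def perm_perm_abs_free comp_def)

lemma length_name_list_shape: "length (name_list (shape u)) = length (name_list u)"
  by (simp add: shape_def name_list_perm)

lemma abs_free_shape_name_list_inject:
  "abs_free u \<Longrightarrow> abs_free v \<Longrightarrow> shape u = shape v \<Longrightarrow> name_list u = name_list v \<Longrightarrow> u = v"
proof (induction u arbitrary: v)
  case Star
  then show ?case by (cases v) (simp_all add: shape_def)
next
  case (Nm a)
  then show ?case by (cases v) (simp_all add: shape_def)
next
  case (Inj c t)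
  then show ?case by (cases v) (simp_all add: shape_def)
next
  case (Tup ts)
  then obtain ts' where v: "v = Tup ts'" and shapes: "map shape ts = map shape ts'"
    by (cases v) (simp_all add: shape_def)
  have len: "length ts = length ts'"
    using shapes map_eq_imp_length_eq by blast
  have shape_nth: "shape (ts ! i) = shape (ts' ! i)" if "i < length ts" for i
    using shapes that len by (metis nth_map)
  have "length (name_list (ts ! i)) = length (name_list (ts' ! i))" if "i < length ts" for i
    using shape_nth[OF that] by (metis length_name_list_shape)
  then have "map name_list ts = map name_list ts'"
    using Tup.prems(4) v len by (intro concat_injective) (auto simp: set_zip)
  then have "ts ! i = ts' ! i" if "i < length ts" for i
    using Tup.IH[OF nth_mem[OF that]] Tup.prems(1,2) v that len shape_nth
    by (metis list_all_length abs_free.simps(4) nth_map)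
  then show ?case
    using v len by (simp add: list_eq_iff_nth_eq)
next
  case (Pr s t)
  then obtain s' t' where v: "v = Pr s' t'" "shape s = shape s'" "shape t = shape t'"
    by (cases v) (simp_all add: shape_def)
  then have "length (name_list s) = length (name_list s')"
    by (metis length_name_list_shape)
  then show ?case
    using Pr v by simp
qed (simp add: shape_def)

section \<open>The iterates and the maps a^(n)\<close>

abbreviation factor_in :: "'op nv set \<Rightarrow> nat \<Rightarrow> 'op nv \<Rightarrow> bool" where
  "factor_in X k t \<equiv> \<exists>xs w. length xs = k \<and> w \<in> X \<and> t = Pr (Tup (map Nm xs)) w"

lemma FsetE:
  assumes "v \<in> Fset ar X"
  obtains (Nm) a where "v = Nm a"
    | (Inj) c ts where "v = Inj c (Tup ts)" "list_all2 (factor_in X) (ar c) ts"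
  using assms unfolding Fset_def by blast

lemma FasetE:
  assumes "v \<in> Faset ar X"
  obtains (Nm) a where "v = Nm a"
    | (Inj) c ts where "v = Inj c (Tup ts)" "list_all2 (\<lambda>k t. t \<in> absn k X) (ar c) ts"
  using assms unfolding Faset_def by blast

lemma factor_in_setD:
  "list_all2 (factor_in X) ks ts \<Longrightarrow> t \<in> set ts \<Longrightarrow> \<exists>xs w. w \<in> X \<and> t = Pr (Tup (map Nm xs)) w"
  by (induction rule: list_all2_induct) auto

lemma amap_Inj:
  "amap (Suc n) (Inj c (Tup ts)) = Inj c (Tup (map (qfac \<circ> fmap_fac (amap n)) ts))"
  by simp

lemma perm_factor:
  "perm p (Pr (Tup (map Nm xs)) w) = Pr (Tup (map Nm (map p xs))) (perm p w)"
  by simp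

lemma foldr_abs_class_name_of [simp]:
  "foldr (\<lambda>m. abs_class (name_of m)) (map Nm xs) w = foldr abs_class xs w"
  by (induction xs) auto

lemma qfac_fmap_factor:
  "qfac (fmap_fac f (Pr (Tup (map Nm xs)) w)) = foldr abs_class xs (f w)"
  by simp

lemma Fiter_abs_free: "v \<in> Fiter ar n \<Longrightarrow> abs_free v"
proof (induction n arbitrary: v)
  case (Suc n)
  from Suc.prems have "v \<in> Fset ar (Fiter ar n)" by simp
  then show ?case
  proof (cases rule: FsetE)
    case (Inj c ts)
    have "abs_free t" if "t \<in> set ts" for t
      using factor_in_setD[OF Inj(2) that] Suc.IH by (auto simp: list_all_iff)
    then show ?thesis
      using Inj(1) by (simp add: list_all_iff)
  qed simp
qed simp

lemma Fiter_perm: "v \<in> Fiter ar n \<Longrightarrow> perm p v \<in> Fiter ar n"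
proof (induction n arbitrary: v)
  case (Suc n)
  from Suc.prems have "v \<in> Fset ar (Fiter ar n)" by simp
  then show ?case
  proof (cases rule: FsetE)
    case (Inj c ts)
    have "list_all2 (factor_in (Fiter ar n)) (ar c) (map (perm p) ts)"
      unfolding list_all2_map2 using Inj(2)
    proof (rule list_all2_mono)
      fix k t assume "factor_in (Fiter ar n) k t"
      then obtain xs w where "length xs = k" "w \<in> Fiter ar n" "t = Pr (Tup (map Nm xs)) w"
        by blast
      then show "factor_in (Fiter ar n) k (perm p t)"
        using Suc.IH by (intro exI[of _ "map p xs"] exI[of _ "perm p w"]) simp
    qed
    then show ?thesis
      using Inj(1) by (simp add: Fset_def)
  qed (simp add: Fset_def)
qed simp

lemma amap_eqvt: "v \<in> Fiter ar n \<Longrightarrow> bij p \<Longrightarrow> amap n (perm p v) = perm p (amap n v)"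
proof (induction n arbitrary: v)
  case (Suc n)
  from Suc.prems(1) have "v \<in> Fset ar (Fiter ar n)" by simp
  then show ?case
  proof (cases rule: FsetE)
    case (Inj c ts)
    have "(qfac \<circ> fmap_fac (amap n)) (perm p t) = perm p ((qfac \<circ> fmap_fac (amap n)) t)"
      if t: "t \<in> set ts" for t
    proof -
      obtain xs w where w: "w \<in> Fiter ar n" and t: "t = Pr (Tup (map Nm xs)) w"
        using factor_in_setD[OF Inj(2) t] by blast
      show ?thesis
        unfolding t perm_factor comp_apply qfac_fmap_factor
        using Suc.IH[OF w Suc.prems(2)] Suc.prems(2) by (simp add: foldr_abs_class_eqvt)
    qed
    then show ?thesis
      using Inj(1) by (simp only: amap_Inj perm.simps map_map) (simp cong: map_cong)
  qed simp
qed simp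

lemma supp_amap_subset:
  assumes "v \<in> Fiter ar n"
  shows "supp (amap n v) \<subseteq> set (name_list v)"
proof -
  have "supp (amap n v) \<subseteq> supp v"
    by (rule supp_eqvt_subset) (rule amap_eqvt[OF assms bij_nswap])
  then show ?thesis
    using supp_abs_free[OF Fiter_abs_free[OF assms]] by simp
qed

lemma foldr_abs_class_in_absn: "b \<in> X \<Longrightarrow> foldr abs_class xs b \<in> absn (length xs) X"
  by (induction xs) auto

lemma amap_in_Faiter: "v \<in> Fiter ar n \<Longrightarrow> amap n v \<in> Faiter ar n"
proof (induction n arbitrary: v)
  case (Suc n)
  from Suc.prems have "v \<in> Fset ar (Fiter ar n)" by simp
  then show ?case
  proof (cases rule: FsetE)
    case (Inj c ts)
    have "list_all2 (\<lambda>k t. t \<in> absn k (Faiter ar n)) (ar c) (map (qfac \<circ> fmap_fac (amap n)) ts)"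
      unfolding list_all2_map2 using Inj(2)
    proof (rule list_all2_mono)
      fix k t assume "factor_in (Fiter ar n) k t"
      then obtain xs w where "w \<in> Fiter ar n" "t = Pr (Tup (map Nm xs)) w" "k = length xs"
        by blast
      then show "(qfac \<circ> fmap_fac (amap n)) t \<in> absn k (Faiter ar n)"
        unfolding comp_apply using foldr_abs_class_in_absn[OF Suc.IH] by (simp only: qfac_fmap_factor)
    qed
    then show ?thesis
      using Inj(1) by (simp only: amap_Inj Faiter.simps) (simp add: Faset_def)
  qed (simp add: Faset_def)
qed simp

lemma finite_supp_amap: "v \<in> Fiter ar n \<Longrightarrow> finite (supp (amap n v))"
  by (rule finite_subset[OF supp_amap_subset]) simp_all

section \<open>Preimages with fresh binders\<close>

lemma absn_perm:
  assumes "\<And>x. x \<in> X \<Longrightarrow> perm p x \<in> X" and "bij p"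
  shows "t \<in> absn k X \<Longrightarrow> perm p t \<in> absn k X"
proof (induction k arbitrary: t)
  case (Suc k)
  then obtain x w where "t = abs_class x w" "w \<in> absn k X"
    by auto
  then show ?case
    using Suc.IH assms(2) by (auto simp: abs_class_eqvt)
qed (use assms in simp)

lemma absn_finite_supp:
  "(\<And>x. x \<in> X \<Longrightarrow> finite (supp x)) \<Longrightarrow> t \<in> absn k X \<Longrightarrow> finite (supp t)"
  by (induction k arbitrary: t) (auto simp: supp_abs_class)

lemma absn_fresh_binders:
  assumes perm_closed: "\<And>p x. bij p \<Longrightarrow> x \<in> X \<Longrightarrow> perm p x \<in> X"
    and fin: "\<And>x. x \<in> X \<Longrightarrow> finite (supp x)"
  shows "t \<in> absn k X \<Longrightarrow> finite S \<Longrightarrow>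
    \<exists>zs b. length zs = k \<and> distinct zs \<and> set zs \<inter> S = {} \<and> b \<in> X \<and> t = foldr abs_class zs b"
proof (induction k arbitrary: t S)
  case 0
  then show ?case by simp
next
  case (Suc k)
  then obtain x w where t: "t = abs_class x w" and w: "w \<in> absn k X"
    by auto
  have fw: "finite (supp w)"
    using absn_finite_supp[OF fin w] .
  have "finite (S \<union> supp w)"
    using fw Suc.prems by simp
  then obtain z where z: "z \<notin> S \<union> supp w"
    by (rule obtain_fresh_name)
  have t': "t = abs_class z (perm (nswap x z) w)"
    using abs_class_rename[OF fw, of z x] z t by simp
  have "perm (nswap x z) w \<in> absn k X"
    using absn_perm[OF perm_closed[OF bij_nswap] bij_nswap w] .
  moreover have "finite (insert z S)"
    using Suc.prems by simp
  ultimately obtain zs b where "length zs = k" "distinct zs" "set zs \<inter> insert z S = {}"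
    "b \<in> X" "perm (nswap x z) w = foldr abs_class zs b"
    using Suc.IH by blast
  then show ?case
    using z t' by (intro exI[of _ "z # zs"] exI[of _ b]) auto
qed

lemma list_all2_fresh_preimages:
  assumes fresh_preimage: "\<And>y S. y \<in> X \<Longrightarrow> finite S \<Longrightarrow>
      \<exists>u\<in>Y. f u = y \<and> distinct (binders u) \<and> set (binders u) \<inter> S = {}"
    and perm_closed: "\<And>p x. bij p \<Longrightarrow> x \<in> X \<Longrightarrow> perm p x \<in> X"
    and fin: "\<And>x. x \<in> X \<Longrightarrow> finite (supp x)"
  shows "list_all2 (\<lambda>k t. t \<in> absn k X) ks ys \<Longrightarrow> finite S \<Longrightarrow>
    \<exists>ts. list_all2 (factor_in Y) ks ts \<and> map (qfac \<circ> fmap_fac f) ts = ys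
      \<and> distinct (concat (map binders ts)) \<and> set (concat (map binders ts)) \<inter> S = {}"
proof (induction arbitrary: S rule: list_all2_induct)
  case Nil
  then show ?case by simp
next
  case (Cons k ks y ys)
  obtain zs b where zs: "length zs = k" "distinct zs" "set zs \<inter> S = {}" "b \<in> X"
    and y: "y = foldr abs_class zs b"
    using absn_fresh_binders[OF perm_closed fin Cons.hyps(1) Cons.prems] by blast
  obtain u where u: "u \<in> Y" "f u = b" "distinct (binders u)" "set (binders u) \<inter> (S \<union> set zs) = {}"
    using fresh_preimage[OF zs(4)] Cons.prems by blast
  define t where "t = Pr (Tup (map Nm zs)) u"
  have binders_t: "binders t = zs @ binders u"
    by (simp only: t_def binders.simps name_list_Tup_Nm)
  obtain ts where ts: "list_all2 (factor_in Y) ks ts" "map (qfac \<circ> fmap_fac f) ts = ys"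
    "distinct (concat (map binders ts))" "set (concat (map binders ts)) \<inter> (S \<union> set (binders t)) = {}"
    using Cons.IH[of "S \<union> set (binders t)"] Cons.prems by auto
  have "(qfac \<circ> fmap_fac f) t = y"
    unfolding t_def comp_apply qfac_fmap_factor y u(2) ..
  then show ?case
    using ts zs u binders_t by (intro exI[of _ "t # ts"]) (auto simp: t_def)
qed

lemma amap_fresh_preimage:
  "y \<in> Faiter ar n \<Longrightarrow> finite S \<Longrightarrow>
    \<exists>u\<in>Fiter ar n. amap n u = y \<and> distinct (binders u) \<and> set (binders u) \<inter> S = {}"
proof (induction n arbitrary: y S)
  case (Suc n)
  have surj: "Faiter ar n = amap n ` Fiter ar n"
    using Suc.IH[of _ "{}"] amap_in_Faiter by blast
  have perm_closed: "perm p x \<in> Faiter ar n" if p: "bij p" and x: "x \<in> Faiter ar n" for p x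
  proof -
    obtain u where u: "u \<in> Fiter ar n" "x = amap n u"
      using x unfolding surj by blast
    then show ?thesis
      using amap_in_Faiter[OF Fiter_perm[OF u(1), of p]] amap_eqvt[OF u(1) p] by simp
  qed
  have fin: "finite (supp x)" if "x \<in> Faiter ar n" for x
    using that finite_supp_amap unfolding surj by auto
  from Suc.prems(1) have "y \<in> Faset ar (Faiter ar n)" by simp
  then show ?case
  proof (cases rule: FasetE)
    case (Nm a)
    then show ?thesis by (intro bexI[of _ "Nm a"]) (auto simp: Fset_def)
  next
    case (Inj c ys)
    obtain ts where ts: "list_all2 (factor_in (Fiter ar n)) (ar c) ts"
      "map (qfac \<circ> fmap_fac (amap n)) ts = ys"
      "distinct (concat (map binders ts))" "set (concat (map binders ts)) \<inter> S = {}"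
      using list_all2_fresh_preimages[OF Suc.IH perm_closed fin Inj(2) Suc.prems(2)] by blast
    have "Inj c (Tup ts) \<in> Fiter ar (Suc n)"
      using ts(1) by (simp add: Fset_def)
    then show ?thesis
      using ts(2-4) Inj(1) by (intro bexI[of _ "Inj c (Tup ts)"]) (simp_all only: amap_Inj binders.simps)
  qed
qed simp

lemma amap_image_Fiter: "amap n ` Fiter ar n = Faiter ar n"
  using amap_in_Faiter amap_fresh_preimage[of _ ar n "{}"] by blast

lemma finite_supp_Faiter: "y \<in> Faiter ar n \<Longrightarrow> finite (supp y)"
  using finite_supp_amap unfolding amap_image_Fiter[symmetric] by auto

section \<open>Safety\<close>

lemma supp_subset_supp_Inj_Tup:
  assumes "t \<in> set ts"
  shows "supp t \<subseteq> supp (Inj c (Tup ts))"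
proof -
  obtain i where i: "i < length ts" "t = ts ! i"
    using assms by (auto simp: in_set_conv_nth)
  have "perm p (Inj c (Tup ts)) \<noteq> Inj c (Tup ts)" if "perm p t \<noteq> t" for p
    using that i by (auto dest: arg_cong[where f="\<lambda>ts. ts ! i"])
  then have "{b. perm (nswap a b) t \<noteq> t} \<subseteq> {b. perm (nswap a b) (Inj c (Tup ts)) \<noteq> Inj c (Tup ts)}" for a
    by blast
  then show ?thesis
    by (auto simp: supp_def dest: finite_subset)
qed

lemma name_list_subset_binders_supp_amap:
  "v \<in> Fiter ar n \<Longrightarrow> set (name_list v) \<subseteq> set (binders v) \<union> supp (amap n v)"
proof (induction n arbitrary: v)
  case (Suc n)
  from Suc.prems have "v \<in> Fset ar (Fiter ar n)" by simp
  then show ?case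
  proof (cases rule: FsetE)
    case (Nm a)
    then show ?thesis by (simp add: supp_abs_free)
  next
    case (Inj c ts)
    have "set (name_list t) \<subseteq> set (binders t) \<union> supp (amap (Suc n) v)" if t: "t \<in> set ts" for t
    proof -
      obtain xs w where w: "w \<in> Fiter ar n" and t_eq: "t = Pr (Tup (map Nm xs)) w"
        using factor_in_setD[OF Inj(2) t] by blast
      have "(qfac \<circ> fmap_fac (amap n)) t \<in> set (map (qfac \<circ> fmap_fac (amap n)) ts)"
        using t by simp
      then have "foldr abs_class xs (amap n w) \<in> set (map (qfac \<circ> fmap_fac (amap n)) ts)"
        by (simp add: t_eq)
      then have "supp (foldr abs_class xs (amap n w)) \<subseteq> supp (amap (Suc n) v)"
        unfolding Inj(1) amap_Inj by (rule supp_subset_supp_Inj_Tup)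
      then show ?thesis
        using Suc.IH[OF w] supp_foldr_abs_class[OF finite_supp_amap[OF w]] by (auto simp: t_eq)
    qed
    then show ?thesis
      using Inj(1) by auto
  qed
qed simp

lemma card_supp_le_binders_supp_amap:
  assumes "v \<in> Fiter ar n"
  shows "card (supp v) \<le> length (binders v) + card (supp (amap n v))"
proof -
  have "card (supp v) \<le> card (set (binders v) \<union> supp (amap n v))"
    using name_list_subset_binders_supp_amap[OF assms] finite_supp_amap[OF assms]
    by (simp add: supp_abs_free[OF Fiter_abs_free[OF assms]] card_mono)
  also have "\<dots> \<le> card (set (binders v)) + card (supp (amap n v))"
    by (rule card_Un_le)
  also have "\<dots> \<le> length (binders v) + card (supp (amap n v))"
    using card_length by simp
  finally show ?thesis .
qed

text \<open>q identifies two factors only if it renames their binders, and then the images of their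
  bodies lie in one orbit.\<close>
lemma shape_factor_eq_if_qfac_eq:
  assumes shape_fibre: "\<And>w w'. w \<in> Fiter ar n \<Longrightarrow> w' \<in> Fiter ar n \<Longrightarrow> amap n w = amap n w'
      \<Longrightarrow> shape w = shape w'"
    and t: "factor_in (Fiter ar n) k t" and t': "factor_in (Fiter ar n) k t'"
    and eq: "(qfac \<circ> fmap_fac (amap n)) t = (qfac \<circ> fmap_fac (amap n)) t'"
  shows "shape t = shape t'"
proof -
  obtain xs w xs' w' where xs: "length xs = k" "length xs' = k"
    and w: "w \<in> Fiter ar n" "w' \<in> Fiter ar n"
    and t_eq: "t = Pr (Tup (map Nm xs)) w" "t' = Pr (Tup (map Nm xs')) w'"
    using t t' by blast
  have "foldr abs_class xs (amap n w) = foldr abs_class xs' (amap n w')"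
    using eq by (simp add: t_eq qfac_fmap_factor)
  then obtain p where p: "bij p" "amap n w' = perm p (amap n w)"
    using foldr_abs_class_eq_imp_perm finite_supp_amap w xs by metis
  then have "shape (perm p w) = shape w'"
    using shape_fibre[OF Fiter_perm[OF w(1)] w(2)] amap_eqvt[OF w(1) p(1)] by simp
  then have "shape w = shape w'"
    by (simp add: shape_perm Fiter_abs_free[OF w(1)])
  then show ?thesis
    using xs by (simp add: t_eq shape_def comp_def map_replicate_const)
qed

lemma shape_eq_if_amap_eq:
  "v \<in> Fiter ar n \<Longrightarrow> v' \<in> Fiter ar n \<Longrightarrow> amap n v = amap n v' \<Longrightarrow> shape v = shape v'"
proof (induction n arbitrary: v v')
  case (Suc n)
  from Suc.prems(1,2) have "v \<in> Fset ar (Fiter ar n)" "v' \<in> Fset ar (Fiter ar n)"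
    by simp_all
  then show ?case
  proof (cases rule: FsetE[case_product FsetE])
    case (Inj_Inj c ts c' ts')
    let ?F = "qfac \<circ> fmap_fac (amap n)"
    have "c = c' \<and> map ?F ts = map ?F ts'"
      using Suc.prems(3) Inj_Inj(1,3) by (simp only: amap_Inj nv.inject)
    then have cc: "c' = c" and images: "map ?F ts = map ?F ts'"
      by simp_all
    have len: "length ts = length ts'"
      using images map_eq_imp_length_eq by blast
    have "shape (ts ! i) = shape (ts' ! i)" if i: "i < length ts" for i
    proof -
      have t: "factor_in (Fiter ar n) (ar c ! i) (ts ! i)"
        using Inj_Inj(2) i by (simp add: list_all2_conv_all_nth)
      have t': "factor_in (Fiter ar n) (ar c ! i) (ts' ! i)"
        using Inj_Inj(4) i len unfolding cc by (simp add: list_all2_conv_all_nth)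
      have "?F (ts ! i) = ?F (ts' ! i)"
        using images i len by (metis nth_map)
      then show ?thesis
        using shape_factor_eq_if_qfac_eq[OF _ t t'] Suc.IH by blast
    qed
    then have "map shape ts = map shape ts'"
      using len by (simp add: list_eq_iff_nth_eq)
    then show ?thesis
      using Inj_Inj(1,3) cc by (simp add: shape_def)
  qed (use Suc.prems(3) in \<open>simp_all add: shape_def\<close>)
qed simp

lemma length_binders_eq_if_amap_eq:
  "v \<in> Fiter ar n \<Longrightarrow> v' \<in> Fiter ar n \<Longrightarrow> amap n v = amap n v' \<Longrightarrow> length (binders v) = length (binders v')"
  using shape_eq_if_amap_eq[of v ar n v'] binders_perm[of "\<lambda>_. 0" v] binders_perm[of "\<lambda>_. 0" v']
  unfolding shape_def by (metis length_map)

lemma safe_map_amap: "safe_map (amap n) (Fiter ar n) (Faiter ar n)"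
  unfolding safe_map_def
proof
  fix y assume y: "y \<in> Faiter ar n"
  obtain u where u: "u \<in> Fiter ar n" "amap n u = y" "distinct (binders u)" "set (binders u) \<inter> supp y = {}"
    using amap_fresh_preimage[OF y finite_supp_Faiter[OF y]] by blast
  have "card (supp v) \<le> card (supp u)" if v: "v \<in> Fiter ar n" "amap n v = amap n u" for v
  proof -
    have "card (supp v) \<le> length (binders v) + card (supp y)"
      using card_supp_le_binders_supp_amap[OF v(1)] v(2) u(2) by simp
    also have "\<dots> = card (set (binders u)) + card (supp y)"
      using length_binders_eq_if_amap_eq[OF v(1) u(1) v(2)] distinct_card[OF u(3)] by simp
    also have "\<dots> = card (set (binders u) \<union> supp y)"
      using u(4) finite_supp_Faiter[OF y] by (simp add: card_Un_disjoint)
    also have "\<dots> \<le> card (supp u)"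
      using set_binders_subset[of u] supp_amap_subset[OF u(1)] u(2)
      by (intro card_mono) (simp_all add: supp_abs_free[OF Fiter_abs_free[OF u(1)]])
    finally show ?thesis .
  qed
  then show "\<exists>u. f_safe (amap n) (Fiter ar n) u \<and> amap n u = y"
    using u(1,2) unfolding f_safe_def by blast
qed

section \<open>Orbit-finite fibres\<close>

lemma fperm_bij: "fperm p \<Longrightarrow> bij p"
  by (simp add: fperm_def)

lemma fperm_comp:
  assumes "fperm p" and "fperm q"
  shows "fperm (p \<circ> q)"
proof -
  have "{a. (p \<circ> q) a \<noteq> a} \<subseteq> {a. q a \<noteq> a} \<union> {a. p a \<noteq> a}"
    by auto
  then show ?thesis
    using assms by (auto simp: fperm_def bij_comp intro: finite_subset)
qed

lemma fperm_inv:
  assumes "fperm p"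
  shows "fperm (inv p)"
proof -
  have p: "bij p"
    using assms by (rule fperm_bij)
  have "a = p (inv p a)" for a
    using p by (simp add: bij_is_surj surj_f_inv_f)
  then have "{a. inv p a \<noteq> a} \<subseteq> p ` {a. p a \<noteq> a}"
    by (smt (verit) image_eqI mem_Collect_eq subsetI)
  then show ?thesis
    using assms p by (auto simp: fperm_def bij_imp_bij_inv intro: finite_subset)
qed

lemma fperm_nswap: "fperm (nswap a b)"
proof -
  have "{c. nswap a b c \<noteq> c} \<subseteq> {a, b}"
    by (auto simp: nswap_def)
  then show ?thesis
    by (auto simp: fperm_def intro: finite_subset)
qed

lemma orbit_perm:
  assumes p: "fperm p"
  shows "orbit (perm p v) = orbit v"
proof -
  have "perm q (perm p v) = perm (q \<circ> p) v" and "perm q v = perm (q \<circ> inv p) (perm p v)"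
    if "fperm q" for q
    using that p fperm_bij[OF that] fperm_bij[OF p]
    by (simp_all add: perm_comp bij_comp bij_imp_bij_inv o_assoc[symmetric] bij_is_inj)
  then show ?thesis
    unfolding orbit_def using fperm_comp fperm_inv[OF p] p by blast
qed

lemma fperm_image_subset:
  "finite A \<Longrightarrow> finite B \<Longrightarrow> card A \<le> card B \<Longrightarrow> \<exists>p. fperm p \<and> p ` A \<subseteq> B"
proof (induction A arbitrary: B rule: finite_induct)
  case empty
  have "fperm id"
    by (simp add: fperm_def)
  then show ?case by blast
next
  case (insert a A)
  then have card_B: "Suc (card A) \<le> card B"
    by simp
  then obtain b where b: "b \<in> B"
    by (metis card.empty ex_in_conv not_less_eq_eq zero_le)
  have "card A \<le> card (B - {b})"
    using card_B b insert.prems(1) by simp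
  moreover have "finite (B - {b})"
    using insert.prems(1) by simp
  ultimately obtain q where q: "fperm q" "q ` A \<subseteq> B - {b}"
    using insert.IH by blast
  have fixed: "nswap (q a) b (q x) = q x" if x: "x \<in> A" for x
  proof (rule nswap_apply(3))
    show "q x \<noteq> q a"
      using x insert.hyps(2) fperm_bij[OF q(1)] by (metis bij_is_inj injD)
    show "q x \<noteq> b"
      using x q(2) by blast
  qed
  have "(nswap (q a) b \<circ> q) ` insert a A \<subseteq> B"
    unfolding image_insert comp_apply nswap_apply(1) using b q(2) fixed by auto
  then show ?case
    using fperm_comp[OF fperm_nswap q(1)] by blast
qed

lemma finite_Fiter_shape_names:
  assumes "finite K"
  shows "finite {w \<in> Fiter ar n. shape w = S \<and> set (name_list w) \<subseteq> K}"
    (is "finite ?W")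
proof (rule inj_on_finite)
  show "inj_on name_list ?W"
  proof (rule inj_onI)
    fix w w' assume w: "w \<in> ?W" and w': "w' \<in> ?W" and eq: "name_list w = name_list w'"
    have "abs_free w" "abs_free w'"
      using w w' Fiter_abs_free by blast+
    from abs_free_shape_name_list_inject[OF this] show "w = w'"
      using w w' eq by simp
  qed
  show "name_list ` ?W \<subseteq> {xs. set xs \<subseteq> K \<and> length xs = length (name_list S)}"
  proof (rule image_subsetI)
    fix w assume "w \<in> ?W"
    then show "name_list w \<in> {xs. set xs \<subseteq> K \<and> length xs = length (name_list S)}"
      using length_name_list_shape[of w] by auto
  qed
  show "finite {xs. set xs \<subseteq> K \<and> length xs = length (name_list S)}"
    using finite_lists_length_eq[OF assms] .
qed

lemma orbit_finite_fibres_amap: "orbit_finite_fibres (amap n) (Fiter ar n) (Faiter ar n)"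
  unfolding orbit_finite_fibres_def
proof
  fix y assume y: "y \<in> Faiter ar n"
  then obtain u where u: "u \<in> Fiter ar n" "amap n u = y"
    unfolding amap_image_Fiter[symmetric] by blast
  define N where "N = length (binders u) + card (supp y)"
  let ?W = "{w \<in> Fiter ar n. shape w = shape u \<and> set (name_list w) \<subseteq> {..<N}}"
  have "orbit ` {v \<in> Fiter ar n. amap n v = y} \<subseteq> orbit ` ?W"
  proof
    fix ob assume "ob \<in> orbit ` {v \<in> Fiter ar n. amap n v = y}"
    then obtain v where v: "v \<in> Fiter ar n" "amap n v = y" "ob = orbit v"
      by blast
    have "card (set (name_list v)) \<le> card {..<N}"
      using card_supp_le_binders_supp_amap[OF v(1)] length_binders_eq_if_amap_eq[OF v(1) u(1)] v(2) u(2)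
      by (simp add: N_def supp_abs_free[OF Fiter_abs_free[OF v(1)]])
    then obtain p where p: "fperm p" "p ` set (name_list v) \<subseteq> {..<N}"
      using fperm_image_subset[of "set (name_list v)" "{..<N}"] by auto
    have "perm p v \<in> ?W"
      using Fiter_perm[OF v(1)] shape_perm[OF Fiter_abs_free[OF v(1)]] p(2)
        shape_eq_if_amap_eq[OF v(1) u(1)] v(2) u(2)
      by (simp add: name_list_perm)
    moreover have "orbit (perm p v) = ob"
      using orbit_perm[OF p(1)] v(3) by simp
    ultimately show "ob \<in> orbit ` ?W"
      by blast
  qed
  moreover have "finite ?W"
    by (rule finite_Fiter_shape_names) simp
  ultimately show "finite (orbit ` {v \<in> Fiter ar n. amap n v = y})"
    by (simp add: finite_subset)
qed

theorem proposition5p34: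
  fixes ar :: "'op::countable \<Rightarrow> nat list" and n :: nat
  shows "amap n ` Fiter ar n = Faiter ar n
       \<and> orbit_finite_fibres (amap n) (Fiter ar n) (Faiter ar n)
       \<and> safe_map (amap n) (Fiter ar n) (Faiter ar n)"
  using amap_image_Fiter orbit_finite_fibres_amap safe_map_amap by blast

end
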